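(* $\mathrm{Adm}^{\mathrm{reg}}(\rho)\cap X_*(\check T)=\{t^{w\rho}: w\in W\}$, where $X_*(\check T)$ is viewed inside $\widetilde W$ via $\mu\mapsto t^\mu$.
   Context: $\check G$ is a split reductive group with split maximal torus $\check T$ and Borel $\check B\supset\check T$; the positive roots $\check\Phi^+$ are the roots of $\check T$ on $\check{\mathfrak g}/\check{\mathfrak b}$. $W$ is the finite Weyl group, $w_0$ its longest element, $\check Q^\vee\subset X_*(\check T)$ the coroot lattice, and $\widetilde W=X_*(\check T)\rtimes W$ the extended affine Weyl group (elements $t^\lambda w$), acting by affine transformations on $X_*(\check T)_{\mathbf R}$. The hyperplanes $H_{\alpha,k}=\{x:\langle x,\alpha\rangle=k\}$ cut out alcoves; $A_0=\{x: 0<\langle x,\alpha\rangle<1\ \forall\alpha\in\check\Phi^+\}$ is the dominant base alcove. Writing $\widetilde W=W_{\mathrm{aff}}\rtimes\Omega$ with $W_{\mathrm{aff}}=\check Q^\vee\rtimes W$ (a Coxeter group with simple reflections the reflections in the walls of $A_0$) and $\Omega$ the stabilizer of $A_0$, the Bruhat order is $\tilde w\omega\le\tilde w'\omega'$ iff $\omega=\omega'$ and $\tilde w\le\tilde w'$ in $W_{\mathrm{aff}}$. $\rho\in X_*(\check T)$ is an element with $\langle\rho,\alpha\rangle=1$ for all simple roots $\alpha$. $\mathrm{Adm}(\lambda)=\{\tilde w\in\widetilde W:\tilde w\le t^{w\lambda}$ for some $w\in W\}$. An element $\tilde w$ is regular if $\tilde w(A_0)$ is not contained in any strip $H_\alpha^{(0,1)}=\{x:0<\langle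 x,\alpha\rangle<1\}$ with $\alpha\in\check\Phi^+$; $\mathrm{Adm}^{\mathrm{reg}}(\lambda)$ is the set of regular elements of $\mathrm{Adm}(\lambda)$. *)

theory Defs
  imports "HOL-Analysis.Analysis"
begin

text \<open>Model: X_*(T) is the lattice of integral vectors in real^'n; the character
lattice X^*(T) is also identified with the integral vectors via the dot product,
so the pairing of a cocharacter x with a character a is x \<bullet> a.
Roots Phi are characters, the coroot map cor sends a root to its coroot
(a cocharacter).\<close>

definition lattice :: "(real^'n) set" where
  "lattice = {x. \<forall>i. x $ i \<in> \<int>}"

definition root_datum :: "(real^'n) set \<Rightarrow> (real^'n \<Rightarrow> real^'n) \<Rightarrow> bool" where
  "root_datum Phi cor \<longleftrightarrow>
     finite Phi \<and> Phi \<subseteq> lattice \<and> cor ` Phi \<subseteq> lattice \<and> inj_on cor Phi \<and>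
     (\<forall>a\<in>Phi. cor a \<bullet> a = 2) \<and>
     (\<forall>a\<in>Phi. (\<lambda>b. b - (cor a \<bullet> b) *\<^sub>R a) ` Phi = Phi) \<and>
     (\<forall>a\<in>Phi. (\<lambda>c. c - (c \<bullet> a) *\<^sub>R cor a) ` (cor ` Phi) = cor ` Phi)"

definition reduced_roots :: "(real^'n) set \<Rightarrow> bool" where
  "reduced_roots Phi \<longleftrightarrow> (\<forall>a\<in>Phi. \<forall>c::real. c *\<^sub>R a \<in> Phi \<longrightarrow> c = 1 \<or> c = -1)"

definition positive_system :: "(real^'n) set \<Rightarrow> (real^'n) set \<Rightarrow> bool" where
  "positive_system Phi Phip \<longleftrightarrow>
     (\<exists>v. (\<forall>a\<in>Phi. v \<bullet> a \<noteq> 0) \<and> Phip = {a\<in>Phi. v \<bullet> a > 0})"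

definition simple_roots :: "(real^'n) set \<Rightarrow> (real^'n) set" where
  "simple_roots Phip = {a\<in>Phip. \<not> (\<exists>b\<in>Phip. \<exists>c\<in>Phip. a = b + c)}"

definition refl_cochar :: "(real^'n \<Rightarrow> real^'n) \<Rightarrow> real^'n \<Rightarrow> real^'n \<Rightarrow> real^'n" where
  "refl_cochar cor a x = x - (x \<bullet> a) *\<^sub>R cor a"

inductive_set weyl_group :: "(real^'n) set \<Rightarrow> (real^'n \<Rightarrow> real^'n) \<Rightarrow> (real^'n \<Rightarrow> real^'n) set"
  for Phi cor where
    weyl_id: "id \<in> weyl_group Phi cor"
  | weyl_step: "a \<in> Phi \<Longrightarrow> w \<in> weyl_group Phi cor \<Longrightarrow> refl_cochar cor a \<circ> w \<in> weyl_group Phi cor"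

text \<open>Elements t^lambda w of the extended affine Weyl group as pairs (lambda, w).\<close>
type_synonym ('n) ewg = "(real^'n) \<times> (real^'n \<Rightarrow> real^'n)"

definition ext_affine_weyl :: "(real^'n) set \<Rightarrow> (real^'n \<Rightarrow> real^'n) \<Rightarrow> ('n::finite) ewg set" where
  "ext_affine_weyl Phi cor = {(l, w). l \<in> lattice \<and> w \<in> weyl_group Phi cor}"

definition act :: "('n::finite) ewg \<Rightarrow> real^'n \<Rightarrow> real^'n" where
  "act x v = fst x + snd x v"

definition ewmult :: "('n::finite) ewg \<Rightarrow> ('n::finite) ewg \<Rightarrow> ('n::finite) ewg" where
  "ewmult x y = (fst x + snd x (fst y), snd x \<circ> snd y)"

definition transl :: "real^'n \<Rightarrow> ('n::finite) ewg" where
  "transl m = (m, id)"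

definition base_alcove :: "(real^'n) set \<Rightarrow> (real^'n) set" where
  "base_alcove Phip = {x. \<forall>a\<in>Phip. 0 < x \<bullet> a \<and> x \<bullet> a < 1}"

definition separates :: "real^'n \<Rightarrow> real \<Rightarrow> (real^'n) set \<Rightarrow> (real^'n) set \<Rightarrow> bool" where
  "separates a k A B \<longleftrightarrow>
     ((\<forall>x\<in>A. x \<bullet> a < k) \<and> (\<forall>y\<in>B. y \<bullet> a > k)) \<or>
     ((\<forall>x\<in>A. x \<bullet> a > k) \<and> (\<forall>y\<in>B. y \<bullet> a < k))"

definition ew_length :: "(real^'n) set \<Rightarrow> ('n::finite) ewg \<Rightarrow> nat" where
  "ew_length Phip x =
     card {(a, k::int). a \<in> Phip \<and> separates a (of_int k) (base_alcove Phip) (act x ` base_alcove Phip)}"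

text \<open>Affine reflection in H_{a,k}: t^{k a^vee} s_a.\<close>
definition aff_refl :: "(real^'n \<Rightarrow> real^'n) \<Rightarrow> real^'n \<Rightarrow> int \<Rightarrow> ('n::finite) ewg" where
  "aff_refl cor a k = (of_int k *\<^sub>R cor a, refl_cochar cor a)"

definition bruhat_step :: "(real^'n) set \<Rightarrow> (real^'n \<Rightarrow> real^'n) \<Rightarrow> ('n::finite) ewg \<Rightarrow> ('n::finite) ewg \<Rightarrow> bool" where
  "bruhat_step Phip cor x y \<longleftrightarrow>
     (\<exists>a\<in>Phip. \<exists>k::int. y = ewmult (aff_refl cor a k) x) \<and> ew_length Phip x < ew_length Phip y"

definition bruhat_le :: "(real^'n) set \<Rightarrow> (real^'n \<Rightarrow> real^'n) \<Rightarrow> ('n::finite) ewg \<Rightarrow> ('n::finite) ewg \<Rightarrow> bool" where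
  "bruhat_le Phip cor = (bruhat_step Phip cor)\<^sup>*\<^sup>*"

definition adm :: "(real^'n) set \<Rightarrow> (real^'n) set \<Rightarrow> (real^'n \<Rightarrow> real^'n) \<Rightarrow> real^'n \<Rightarrow> ('n::finite) ewg set" where
  "adm Phi Phip cor l = {x \<in> ext_affine_weyl Phi cor.
       \<exists>w\<in>weyl_group Phi cor. bruhat_le Phip cor x (transl (w l))}"

definition regular :: "(real^'n) set \<Rightarrow> ('n::finite) ewg \<Rightarrow> bool" where
  "regular Phip x \<longleftrightarrow>
     \<not> (\<exists>a\<in>Phip. act x ` base_alcove Phip \<subseteq> {y. 0 < y \<bullet> a \<and> y \<bullet> a < 1})"

definition adm_reg :: "(real^'n) set \<Rightarrow> (real^'n) set \<Rightarrow> (real^'n \<Rightarrow> real^'n) \<Rightarrow> real^'n \<Rightarrow> ('n::finite) ewg set" where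
  "adm_reg Phi Phip cor l = {x \<in> adm Phi Phip cor l. regular Phip x}"

end

theory Submission
  imports Defs
begin

text \<open>The length of a translation t^x is the number of affine root hyperplanes between A_0 and
  x + A_0, namely the sum of the absolute pairings of x with the positive roots, and t^x is
  regular exactly when x pairs nontrivially with every root. Among regular lattice points the
  length is minimal on the W-orbit of rho: reflecting x in a simple root on which it is negative
  keeps the sum over all roots and makes fewer positive roots negative on x, and a dominant
  regular x pairs with every positive root at least as much as rho does. Since a Bruhat-smaller
  element is strictly shorter, a regular translation below t^(w rho) must be t^(w rho) itself.\<close>

lemma lattice_inner_Ints:
  fixes x y :: "real^'n::finite"
  assumes "x \<in> lattice" "y \<in> lattice"
  shows "x \<bullet> y \<in> \<int>"
  using assms unfolding lattice_def inner_vec_def by (auto intro!: Ints_sum)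

text \<open>The integers k for which the hyperplane at k separates the intervals (0, 1) and (n, n + 1).\<close>
lemma
  fixes n :: int
  shows finite_int_walls_between: "finite {k. 1 \<le> k \<and> k \<le> n \<or> n + 1 \<le> k \<and> k \<le> 0}"
    and card_int_walls_between: "card {k. 1 \<le> k \<and> k \<le> n \<or> n + 1 \<le> k \<and> k \<le> 0} = nat \<bar>n\<bar>"
proof -
  show "finite {k. 1 \<le> k \<and> k \<le> n \<or> n + 1 \<le> k \<and> k \<le> 0}"
    by (rule finite_subset[of _ "{- \<bar>n\<bar>..\<bar>n\<bar>}"]) auto
  show "card {k. 1 \<le> k \<and> k \<le> n \<or> n + 1 \<le> k \<and> k \<le> 0} = nat \<bar>n\<bar>"
  proof (cases "0 \<le> n")
    case True
    then have "{k. 1 \<le> k \<and> k \<le> n \<or> n + 1 \<le> k \<and> k \<le> 0} = {1..n}" by auto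
    then show ?thesis using True by simp
  next
    case False
    then have "{k. 1 \<le> k \<and> k \<le> n \<or> n + 1 \<le> k \<and> k \<le> 0} = {n + 1..0}" by auto
    then show ?thesis using False by simp
  qed
qed

lemma
  fixes f :: "'a \<Rightarrow> real"
  assumes "y0 \<in> A" and unit: "\<forall>y\<in>A. 0 < f y \<and> f y < 1"
  shows all_shifted_less_int_iff: "(\<forall>y\<in>A. of_int m + f y < of_int k) \<longleftrightarrow> m + 1 \<le> k"
    and all_int_less_shifted_iff: "(\<forall>y\<in>A. of_int k < of_int m + f y) \<longleftrightarrow> k \<le> m"
proof -
  have "of_int m < (of_int k :: real) \<longleftrightarrow> m + 1 \<le> k" by linarith
  then show "(\<forall>y\<in>A. of_int m + f y < of_int k) \<longleftrightarrow> m + 1 \<le> k"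
    using assms by (smt (verit) of_int_add of_int_le_iff of_int_1)
  have "of_int k < (of_int m + 1 :: real) \<longleftrightarrow> k \<le> m" by linarith
  then show "(\<forall>y\<in>A. of_int k < of_int m + f y) \<longleftrightarrow> k \<le> m"
    using assms by (smt (verit) of_int_le_iff)
qed

lemma bruhat_le_imp_eq_or_length_less:
  assumes "bruhat_le Phip cor x y"
  shows "x = y \<or> ew_length Phip x < ew_length Phip y"
  using assms unfolding bruhat_le_def
proof (induction rule: rtranclp_induct)
  case (step y z)
  then show ?case unfolding bruhat_step_def by auto
qed simp

locale reduced_root_datum =
  fixes Phi :: "(real^'n::finite) set" and cor :: "real^'n \<Rightarrow> real^'n"
  assumes root_datum: "root_datum Phi cor" and reduced: "reduced_roots Phi"
begin

definition refl_char :: "real^'n \<Rightarrow> real^'n \<Rightarrow> real^'n" where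
  "refl_char a b = b - (cor a \<bullet> b) *\<^sub>R a"

lemma finite_roots: "finite Phi"
  and root_lattice: "a \<in> Phi \<Longrightarrow> a \<in> lattice"
  and coroot_lattice: "a \<in> Phi \<Longrightarrow> cor a \<in> lattice"
  and coroot_inner_root: "a \<in> Phi \<Longrightarrow> cor a \<bullet> a = 2"
  and refl_char_image: "a \<in> Phi \<Longrightarrow> refl_char a ` Phi = Phi"
  and refl_cochar_image: "a \<in> Phi \<Longrightarrow> refl_cochar cor a ` cor ` Phi = cor ` Phi"
  using root_datum unfolding root_datum_def refl_char_def refl_cochar_def by auto

lemma refl_char_mem: "a \<in> Phi \<Longrightarrow> b \<in> Phi \<Longrightarrow> refl_char a b \<in> Phi"
  using refl_char_image by blast

lemma refl_char_self: "a \<in> Phi \<Longrightarrow> refl_char a a = - a"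
  by (simp add: refl_char_def coroot_inner_root scaleR_2)

lemma uminus_root: "a \<in> Phi \<Longrightarrow> - a \<in> Phi"
  using refl_char_mem[of a a] refl_char_self by simp

lemma double_root_not_root: "a \<in> Phi \<Longrightarrow> 2 *\<^sub>R a \<notin> Phi"
  using reduced unfolding reduced_roots_def by fastforce

lemma refl_char_involution: "a \<in> Phi \<Longrightarrow> refl_char a (refl_char a b) = b"
  by (simp add: refl_char_def inner_diff_right coroot_inner_root)

lemma refl_cochar_involution: "a \<in> Phi \<Longrightarrow> refl_cochar cor a (refl_cochar cor a c) = c"
  by (simp add: refl_cochar_def inner_diff_left coroot_inner_root)

lemma bij_betw_refl_char: "a \<in> Phi \<Longrightarrow> bij_betw (refl_char a) Phi Phi"
  by (metis bij_betw_def inj_on_inverseI refl_char_image refl_char_involution)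

lemma bij_betw_refl_cochar: "a \<in> Phi \<Longrightarrow> bij_betw (refl_cochar cor a) (cor ` Phi) (cor ` Phi)"
  by (metis bij_betw_def inj_on_inverseI refl_cochar_image refl_cochar_involution)

lemma inner_refl_cochar: "refl_cochar cor a x \<bullet> b = x \<bullet> refl_char a b"
  by (simp add: refl_cochar_def refl_char_def inner_diff_left inner_diff_right inner_commute)

lemma inner_root_Ints: "x \<in> lattice \<Longrightarrow> b \<in> Phi \<Longrightarrow> x \<bullet> b \<in> \<int>"
  by (simp add: lattice_inner_Ints root_lattice)

lemma refl_cochar_lattice: "a \<in> Phi \<Longrightarrow> x \<in> lattice \<Longrightarrow> refl_cochar cor a x \<in> lattice"
  using inner_root_Ints[of x a] coroot_lattice[of a]
  unfolding lattice_def refl_cochar_def by auto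

text \<open>A W-invariant positive semidefinite form; it stands in for the Euclidean structure
  that bounds the products of Cartan integers in a root system.\<close>
definition coroot_form :: "real^'n \<Rightarrow> real^'n \<Rightarrow> real" where
  "coroot_form x y = (\<Sum>c\<in>cor ` Phi. (c \<bullet> x) * (c \<bullet> y))"

lemma coroot_form_commute: "coroot_form x y = coroot_form y x"
  by (simp add: coroot_form_def mult.commute)

lemma coroot_form_nonneg: "0 \<le> coroot_form x x"
  unfolding coroot_form_def by (rule sum_nonneg) simp

lemma coroot_form_eq_0_imp_orthogonal:
  assumes "coroot_form x x = 0" and "g \<in> Phi"
  shows "cor g \<bullet> x = 0"
  using assms finite_roots unfolding coroot_form_def by (subst (asm) sum_nonneg_eq_0_iff) auto

lemma coroot_form_root_pos: "a \<in> Phi \<Longrightarrow> 0 < coroot_form a a"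
  using member_le_sum[of "cor a" "cor ` Phi" "\<lambda>c. (c \<bullet> a) * (c \<bullet> a)"] finite_roots
  by (simp add: coroot_form_def coroot_inner_root)

lemma coroot_form_refl_char:
  assumes "a \<in> Phi"
  shows "coroot_form (refl_char a x) (refl_char a y) = coroot_form x y"
proof -
  have "coroot_form (refl_char a x) (refl_char a y)
      = (\<Sum>c\<in>cor ` Phi. (refl_cochar cor a c \<bullet> x) * (refl_cochar cor a c \<bullet> y))"
    by (simp add: coroot_form_def inner_refl_cochar)
  also have "\<dots> = coroot_form x y"
    unfolding coroot_form_def using bij_betw_refl_cochar[OF assms]
    by (rule sum.reindex_bij_betw)
  finally show ?thesis .
qed

text \<open>Invariance under the reflection s_a, which maps a to - a.\<close>
lemma coroot_form_root_right:
  assumes "a \<in> Phi"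
  shows "2 * coroot_form x a = coroot_form a a * (cor a \<bullet> x)"
proof -
  have "coroot_form x a = coroot_form (refl_char a x) (- a)"
    using coroot_form_refl_char[OF assms, of x a] by (simp add: refl_char_self assms)
  also have "\<dots> = (cor a \<bullet> x) * coroot_form a a - coroot_form x a"
    by (simp add: coroot_form_def refl_char_def inner_diff_right sum_subtractf
        sum_distrib_left sum_negf algebra_simps)
  finally show ?thesis by simp
qed

lemma cartan_pos_iff:
  assumes "a \<in> Phi" "b \<in> Phi"
  shows "0 < cor a \<bullet> b \<longleftrightarrow> 0 < cor b \<bullet> a"
proof -
  have "coroot_form a a * (cor a \<bullet> b) = coroot_form b b * (cor b \<bullet> a)"
    using coroot_form_root_right[OF assms(1), of b] coroot_form_root_right[OF assms(2), of a]
    by (simp add: coroot_form_commute[of a b])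
  then show ?thesis
    using coroot_form_root_pos[OF assms(1)] coroot_form_root_pos[OF assms(2)]
    by (metis mult_pos_pos zero_less_mult_pos)
qed

lemma coroot_form_cartan_defect:
  assumes "a \<in> Phi" "b \<in> Phi"
  defines "w \<equiv> 2 *\<^sub>R b - (cor a \<bullet> b) *\<^sub>R a"
  shows "coroot_form w w = coroot_form b b * (4 - (cor a \<bullet> b) * (cor b \<bullet> a))"
proof -
  let ?c = "cor a \<bullet> b" and ?d = "cor b \<bullet> a"
  have ba: "2 * coroot_form b a = ?d * coroot_form b b"
    using coroot_form_root_right[OF assms(2), of a]
    by (simp add: coroot_form_commute[of a b] mult.commute)
  have aa: "?c * coroot_form a a = ?d * coroot_form b b"
    using ba coroot_form_root_right[OF assms(1), of b]
    by (simp add: coroot_form_commute[of a b] mult.commute)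
  have "coroot_form w w = 4 * coroot_form b b - 4 * ?c * coroot_form b a + ?c\<^sup>2 * coroot_form a a"
    by (simp add: w_def coroot_form_def inner_diff_right sum_subtractf sum.distrib
        sum_distrib_left power2_eq_square algebra_simps)
  also have "\<dots> = 4 * coroot_form b b - 2 * ?c * (2 * coroot_form b a) + ?c * (?c * coroot_form a a)"
    by (simp add: power2_eq_square)
  also have "\<dots> = coroot_form b b * (4 - ?c * ?d)"
    unfolding ba aa by (simp add: algebra_simps)
  finally show ?thesis .
qed

text \<open>Since w is orthogonal to all coroots, s_a s_b acts on the line a + R w as the
  translation by - (d / 2) w, where d is the Cartan integer of b on a.\<close>
lemma orthogonal_translates_in_roots:
  fixes n :: nat and a b :: "real^'n"
  defines "w \<equiv> 2 *\<^sub>R b - (cor a \<bullet> b) *\<^sub>R a"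
  assumes a: "a \<in> Phi" and b: "b \<in> Phi" and cd: "(cor a \<bullet> b) * (cor b \<bullet> a) = 4"
    and orth: "\<forall>g\<in>Phi. cor g \<bullet> w = 0"
  shows "a - (real n * (cor b \<bullet> a) / 2) *\<^sub>R w \<in> Phi"
proof (induction n)
  case 0
  then show ?case using a by simp
next
  case (Suc n)
  let ?c = "cor a \<bullet> b" and ?d = "cor b \<bullet> a"
  have dw: "(?d / 2) *\<^sub>R w = ?d *\<^sub>R b - 2 *\<^sub>R a"
  proof -
    have "(?d / 2) *\<^sub>R w = ?d *\<^sub>R b - (?c * ?d / 2) *\<^sub>R a" by (simp add: w_def algebra_simps)
    then show ?thesis using cd by simp
  qed
  define t where "t = real n * ?d / 2"
  define y where "y = a - t *\<^sub>R w"
  have y: "y \<in> Phi" using Suc by (simp add: y_def t_def)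
  have "cor b \<bullet> y = ?d" using orth b by (simp add: y_def inner_diff_right)
  then have "refl_char b y = - a - t *\<^sub>R w - (?d *\<^sub>R b - 2 *\<^sub>R a)"
    by (simp add: refl_char_def y_def scaleR_2 algebra_simps)
  also have "\<dots> = - a - (t + ?d / 2) *\<^sub>R w"
    unfolding dw[symmetric] by (simp add: algebra_simps)
  finally have refl_b: "refl_char b y = - a - (t + ?d / 2) *\<^sub>R w" .
  have "cor a \<bullet> refl_char b y = -2"
    using orth a by (simp add: refl_b inner_diff_right coroot_inner_root)
  then have "refl_char a (refl_char b y) = refl_char b y + 2 *\<^sub>R a"
    unfolding refl_char_def[of a] by simp
  also have "\<dots> = a - (t + ?d / 2) *\<^sub>R w"
    unfolding refl_b by (simp add: scaleR_2 algebra_simps)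
  finally have "refl_char a (refl_char b y) = a - (t + ?d / 2) *\<^sub>R w" .
  moreover have "refl_char a (refl_char b y) \<in> Phi" using refl_char_mem a b y by blast
  moreover have "t + ?d / 2 = real (Suc n) * ?d / 2" by (simp add: t_def algebra_simps)
  ultimately show ?case by simp
qed

lemma cartan_product_four_imp_proportional:
  assumes a: "a \<in> Phi" and b: "b \<in> Phi" and cd: "(cor a \<bullet> b) * (cor b \<bullet> a) = 4"
  shows "2 *\<^sub>R b = (cor a \<bullet> b) *\<^sub>R a"
proof (rule ccontr)
  let ?d = "cor b \<bullet> a"
  define w where "w = 2 *\<^sub>R b - (cor a \<bullet> b) *\<^sub>R a"
  assume "2 *\<^sub>R b \<noteq> (cor a \<bullet> b) *\<^sub>R a"
  then have "w \<noteq> 0" by (simp add: w_def)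
  have "coroot_form w w = 0" using coroot_form_cartan_defect[OF a b] cd by (simp add: w_def)
  then have "\<forall>g\<in>Phi. cor g \<bullet> w = 0" using coroot_form_eq_0_imp_orthogonal by blast
  then have "range (\<lambda>n::nat. a - (real n * ?d / 2) *\<^sub>R w) \<subseteq> Phi"
    using orthogonal_translates_in_roots[OF a b cd] by (auto simp: w_def)
  moreover have "inj (\<lambda>n::nat. a - (real n * ?d / 2) *\<^sub>R w)"
    using \<open>w \<noteq> 0\<close> cd by (auto intro!: injI simp: scaleR_cancel_right)
  ultimately show False
    using finite_roots finite_subset range_inj_infinite by blast
qed

lemma cartan_product_less_four:
  assumes a: "a \<in> Phi" and b: "b \<in> Phi" and "b \<noteq> a" and "b \<noteq> - a"
  shows "(cor a \<bullet> b) * (cor b \<bullet> a) < 4"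
proof -
  let ?c = "cor a \<bullet> b"
  have "0 \<le> coroot_form b b * (4 - ?c * (cor b \<bullet> a))"
    using coroot_form_cartan_defect[OF a b] coroot_form_nonneg by metis
  then have "?c * (cor b \<bullet> a) \<le> 4"
    using coroot_form_root_pos[OF b] by (simp add: zero_le_mult_iff)
  moreover have "?c * (cor b \<bullet> a) \<noteq> 4"
  proof
    assume "?c * (cor b \<bullet> a) = 4"
    then have "2 *\<^sub>R b = ?c *\<^sub>R a" by (rule cartan_product_four_imp_proportional[OF a b])
    then have "b = (?c / 2) *\<^sub>R a"
      by (metis scaleR_scaleR scaleR_one nonzero_divide_eq_eq zero_neq_numeral
          divide_inverse_commute inverse_eq_divide)
    moreover from this have "?c / 2 = 1 \<or> ?c / 2 = -1"
      using reduced a b unfolding reduced_roots_def by metis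
    ultimately show False using assms(3,4) by auto
  qed
  ultimately show ?thesis by simp
qed

lemma root_diff_mem:
  assumes a: "a \<in> Phi" and b: "b \<in> Phi" and "b \<noteq> a" and c_pos: "0 < cor a \<bullet> b"
  shows "a - b \<in> Phi"
proof -
  obtain i j :: int where i: "cor a \<bullet> b = of_int i" and j: "cor b \<bullet> a = of_int j"
    using lattice_inner_Ints[OF coroot_lattice root_lattice] a b by (metis Ints_cases)
  have "0 < cor b \<bullet> a" using c_pos cartan_pos_iff[OF a b] by simp
  have "b \<noteq> - a" using c_pos a by (auto simp: inner_minus_right coroot_inner_root)
  then have "i * j < 4"
    using cartan_product_less_four[OF a b \<open>b \<noteq> a\<close>] i j by (simp flip: of_int_mult)
  moreover have "1 \<le> i" "1 \<le> j" using c_pos \<open>0 < cor b \<bullet> a\<close> i j by simp_all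
  ultimately have "i = 1 \<or> j = 1"
    using mult_mono[of 2 i 2 j] by linarith
  then show ?thesis
  proof
    assume "i = 1"
    then have "b - a \<in> Phi" using refl_char_mem[OF a b] i by (simp add: refl_char_def)
    then show ?thesis using uminus_root by fastforce
  next
    assume "j = 1"
    then show ?thesis using refl_char_mem[OF b a] j by (simp add: refl_char_def)
  qed
qed

lemma weyl_group_adjoint:
  assumes "w \<in> weyl_group Phi cor"
  shows "\<exists>p. bij_betw p Phi Phi \<and> (\<forall>x b. w x \<bullet> b = x \<bullet> p b)"
  using assms
proof (induction rule: weyl_group.induct)
  case weyl_id
  show ?case by (intro exI[of _ id] conjI bij_betw_id) simp
next
  case (weyl_step a w)
  then obtain p where p: "bij_betw p Phi Phi" "\<forall>x b. w x \<bullet> b = x \<bullet> p b" by blast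
  have "bij_betw (p \<circ> refl_char a) Phi Phi"
    using bij_betw_trans[OF bij_betw_refl_char[OF weyl_step.hyps(1)] p(1)] .
  moreover have "\<forall>x b. (refl_cochar cor a \<circ> w) x \<bullet> b = x \<bullet> (p \<circ> refl_char a) b"
    using p(2) by (simp add: inner_refl_cochar)
  ultimately show ?case by blast
qed

lemma weyl_group_lattice:
  "w \<in> weyl_group Phi cor \<Longrightarrow> x \<in> lattice \<Longrightarrow> w x \<in> lattice"
  by (induction rule: weyl_group.induct) (auto intro: refl_cochar_lattice)

lemma weyl_group_sum_abs_inner:
  assumes "w \<in> weyl_group Phi cor"
  shows "(\<Sum>b\<in>Phi. \<bar>w x \<bullet> b\<bar>) = (\<Sum>b\<in>Phi. \<bar>x \<bullet> b\<bar>)"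
proof -
  obtain p where p: "bij_betw p Phi Phi" "\<forall>x b. w x \<bullet> b = x \<bullet> p b"
    using weyl_group_adjoint[OF assms] by blast
  show ?thesis using sum.reindex_bij_betw[OF p(1), of "\<lambda>b. \<bar>x \<bullet> b\<bar>"] p(2) by simp
qed

lemma weyl_group_regular:
  assumes "w \<in> weyl_group Phi cor" and "\<forall>b\<in>Phi. x \<bullet> b \<noteq> 0"
  shows "\<forall>b\<in>Phi. w x \<bullet> b \<noteq> 0"
proof -
  obtain p where p: "bij_betw p Phi Phi" "\<forall>x b. w x \<bullet> b = x \<bullet> p b"
    using weyl_group_adjoint[OF assms(1)] by blast
  then show ?thesis using assms(2) bij_betwE by fastforce
qed

end

locale positive_root_datum = reduced_root_datum Phi cor
  for Phi :: "(real^'n::finite) set" and cor +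
  fixes Phip :: "(real^'n) set" and v :: "real^'n"
  assumes v_regular: "\<forall>a\<in>Phi. v \<bullet> a \<noteq> 0" and Phip_eq: "Phip = {a\<in>Phi. 0 < v \<bullet> a}"
begin

lemma positive_root_iff: "b \<in> Phip \<longleftrightarrow> b \<in> Phi \<and> 0 < v \<bullet> b"
  using Phip_eq by simp

lemma finite_positive_roots: "finite Phip"
  using finite_roots Phip_eq by simp

lemma root_cases: "b \<in> Phi \<Longrightarrow> b \<in> Phip \<or> - b \<in> Phip"
  using v_regular uminus_root[of b] by (auto simp: positive_root_iff inner_minus_right)

lemma sum_roots_abs_inner: "(\<Sum>b\<in>Phi. \<bar>x \<bullet> b\<bar>) = 2 * (\<Sum>b\<in>Phip. \<bar>x \<bullet> b\<bar>)"
proof -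
  have "Phi = Phip \<union> uminus ` Phip"
  proof
    show "Phi \<subseteq> Phip \<union> uminus ` Phip"
      using root_cases by (force intro: image_eqI[where x = "- b" for b])
    show "Phip \<union> uminus ` Phip \<subseteq> Phi"
      using uminus_root by (auto simp: positive_root_iff)
  qed
  moreover have "Phip \<inter> uminus ` Phip = {}"
    by (auto simp: positive_root_iff inner_minus_right)
  moreover have "(\<Sum>b\<in>uminus ` Phip. \<bar>x \<bullet> b\<bar>) = (\<Sum>b\<in>Phip. \<bar>x \<bullet> b\<bar>)"
    by (subst sum.reindex) (auto simp: inner_minus_right)
  ultimately show ?thesis
    using finite_positive_roots by (simp add: sum.union_disjoint)
qed

lemma positive_root_height_induct:
  assumes "b \<in> Phip"
    and "\<And>b. b \<in> Phip \<Longrightarrow>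
      (\<And>b'. b' \<in> Phip \<Longrightarrow> v \<bullet> b' < v \<bullet> b \<Longrightarrow> P b') \<Longrightarrow> P b"
  shows "P b"
  using assms(1)
proof (induction "card {c\<in>Phip. v \<bullet> c < v \<bullet> b}" arbitrary: b rule: less_induct)
  case less
  show ?case
  proof (rule assms(2)[OF less.prems])
    fix b' assume b': "b' \<in> Phip" "v \<bullet> b' < v \<bullet> b"
    then have "card {c\<in>Phip. v \<bullet> c < v \<bullet> b'} < card {c\<in>Phip. v \<bullet> c < v \<bullet> b}"
      using finite_positive_roots by (intro psubset_card_mono) auto
    then show "P b'" using less.hyps b'(1) by blast
  qed
qed

lemma simple_root_positive: "a \<in> simple_roots Phip \<Longrightarrow> a \<in> Phip"
  by (simp add: simple_roots_def)

lemma simple_root_not_sum: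
  "a \<in> simple_roots Phip \<Longrightarrow> x \<in> Phip \<Longrightarrow> y \<in> Phip \<Longrightarrow> a \<noteq> x + y"
  by (auto simp: simple_roots_def)

lemma positive_root_induct:
  assumes "b \<in> Phip"
    and simple: "\<And>a. a \<in> simple_roots Phip \<Longrightarrow> P a"
    and add: "\<And>x y. x \<in> Phip \<Longrightarrow> y \<in> Phip \<Longrightarrow> P x \<Longrightarrow> P y \<Longrightarrow> P (x + y)"
  shows "P b"
  using assms(1)
proof (rule positive_root_height_induct)
  fix b assume b: "b \<in> Phip"
    and IH: "\<And>b'. b' \<in> Phip \<Longrightarrow> v \<bullet> b' < v \<bullet> b \<Longrightarrow> P b'"
  show "P b"
  proof (cases "b \<in> simple_roots Phip")
    case True
    then show ?thesis by (rule simple)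
  next
    case False
    then obtain x y where xy: "x \<in> Phip" "y \<in> Phip" "b = x + y"
      using b unfolding simple_roots_def by auto
    then have "v \<bullet> x < v \<bullet> b" "v \<bullet> y < v \<bullet> b"
      by (auto simp: positive_root_iff inner_add_right)
    then show ?thesis using IH xy add by blast
  qed
qed

lemma inner_positive_root_nonneg:
  assumes "\<forall>a\<in>simple_roots Phip. 0 \<le> y \<bullet> a" and "b \<in> Phip"
  shows "0 \<le> y \<bullet> b"
  using assms(2) by (rule positive_root_induct) (use assms(1) in \<open>auto simp: inner_add_right\<close>)

lemma inner_positive_root_pos:
  assumes "\<forall>a\<in>simple_roots Phip. 0 < y \<bullet> a" and "b \<in> Phip"
  shows "0 < y \<bullet> b"
  using assms(2) by (rule positive_root_induct) (use assms(1) in \<open>auto simp: inner_add_right\<close>)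

lemma positive_root_minus_simple:
  assumes a: "a \<in> simple_roots Phip" and b: "b \<in> Phip" and "b \<noteq> a" and "0 < cor a \<bullet> b"
  shows "b - a \<in> Phip"
proof -
  have "a - b \<in> Phi"
    using root_diff_mem assms simple_root_positive by (simp add: positive_root_iff)
  moreover have "a - b \<notin> Phip" using simple_root_not_sum[OF a b, of "a - b"] by auto
  ultimately show ?thesis using root_cases by fastforce
qed

text \<open>Since simple
  roots are only known to be indecomposable, the proof goes by induction on the height:
  if a and b pair positively then b - a is a lower positive root, and a root s_a b < 0 would
  decompose a as (s_a b + a) + (- s_a b) = s_a (b - a) + (- s_a b).\<close>
lemma refl_char_simple_root_positive:
  assumes a: "a \<in> simple_roots Phip" and "b \<in> Phip" and "b \<noteq> a"
  shows "refl_char a b \<in> Phip"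
proof -
  have aP: "a \<in> Phip" and aR: "a \<in> Phi"
    using simple_root_positive[OF a] by (auto simp: positive_root_iff)
  have "b \<noteq> a \<longrightarrow> refl_char a b \<in> Phip" using assms(2)
  proof (rule positive_root_height_induct)
    fix b assume b: "b \<in> Phip"
      and IH: "\<And>b'. b' \<in> Phip \<Longrightarrow> v \<bullet> b' < v \<bullet> b \<Longrightarrow>
        b' \<noteq> a \<longrightarrow> refl_char a b' \<in> Phip"
    have sb: "refl_char a b \<in> Phi" using refl_char_mem aR b by (simp add: positive_root_iff)
    show "b \<noteq> a \<longrightarrow> refl_char a b \<in> Phip"
    proof (intro impI)
      assume "b \<noteq> a"
      show "refl_char a b \<in> Phip"
      proof (cases "0 < cor a \<bullet> b")
        case False
        then have "v \<bullet> b \<le> v \<bullet> refl_char a b"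
          using aP by (simp add: refl_char_def inner_diff_right positive_root_iff mult_nonpos_nonneg)
        then show ?thesis using sb b by (simp add: positive_root_iff)
      next
        case True
        have ba: "b - a \<in> Phip" by (rule positive_root_minus_simple[OF a b \<open>b \<noteq> a\<close> True])
        have "b - a \<noteq> a"
          using double_root_not_root[OF aR] b by (auto simp: positive_root_iff scaleR_2)
        moreover have "v \<bullet> (b - a) < v \<bullet> b" using aP by (simp add: positive_root_iff inner_diff_right)
        ultimately have "refl_char a (b - a) \<in> Phip" using IH ba by blast
        moreover have "refl_char a (b - a) = refl_char a b + a"
          using aR by (simp add: refl_char_def inner_diff_right coroot_inner_root algebra_simps scaleR_2)
        ultimately have "refl_char a b + a \<in> Phip" by simp
        then show ?thesis
          using simple_root_not_sum[OF a, of "refl_char a b + a" "- refl_char a b"] root_cases[OF sb]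
          by auto
      qed
    qed
  qed
  then show ?thesis using assms(3) by blast
qed

lemma card_negative_roots_refl_cochar_less:
  assumes a: "a \<in> simple_roots Phip" and xa: "x \<bullet> a < 0"
  shows "card {b\<in>Phip. refl_cochar cor a x \<bullet> b < 0} < card {b\<in>Phip. x \<bullet> b < 0}"
proof -
  let ?S = "{b\<in>Phip. x \<bullet> b < 0}" and ?S' = "{b\<in>Phip. refl_cochar cor a x \<bullet> b < 0}"
  have aP: "a \<in> Phip" and aR: "a \<in> Phi"
    using simple_root_positive[OF a] by (auto simp: positive_root_iff)
  have "refl_char a ` ?S' \<subseteq> ?S - {a}"
  proof
    fix t assume "t \<in> refl_char a ` ?S'"
    then obtain b where b: "b \<in> Phip" "x \<bullet> refl_char a b < 0" and t: "t = refl_char a b"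
      by (auto simp: inner_refl_cochar)
    have "b \<noteq> a" using b(2) xa aR by (auto simp: refl_char_self inner_minus_right)
    then have "t \<in> Phip" using refl_char_simple_root_positive[OF a b(1)] t by simp
    moreover have "t \<noteq> a"
    proof
      assume "t = a"
      then have "b = - a" using t refl_char_involution[OF aR, of b] refl_char_self[OF aR] by simp
      then show False using b(1) aP by (simp add: positive_root_iff inner_minus_right)
    qed
    ultimately show "t \<in> ?S - {a}" using b(2) t by simp
  qed
  moreover have "inj_on (refl_char a) ?S'"
    by (rule inj_on_inverseI[where g = "refl_char a"]) (simp add: refl_char_involution aR)
  then have "card ?S' = card (refl_char a ` ?S')" by (simp add: card_image)
  ultimately have "card ?S' \<le> card (?S - {a})"
    using finite_positive_roots by (simp add: card_mono)
  also have "\<dots> < card ?S"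
    using finite_positive_roots aP xa by (intro card_Diff1_less) auto
  finally show ?thesis .
qed

lemma base_alcove_nonempty: "base_alcove Phip \<noteq> {}"
proof -
  define M where "M = (\<Sum>a\<in>Phip. v \<bullet> a)"
  have M: "0 \<le> M" unfolding M_def by (rule sum_nonneg) (simp add: positive_root_iff less_imp_le)
  have "(1 / (M + 1)) *\<^sub>R v \<in> base_alcove Phip"
    unfolding base_alcove_def
  proof (intro CollectI ballI conjI)
    fix a assume a: "a \<in> Phip"
    have "v \<bullet> a \<le> M" unfolding M_def using a finite_positive_roots
      by (intro member_le_sum) (auto simp: positive_root_iff)
    then show "0 < (1 / (M + 1)) *\<^sub>R v \<bullet> a" and "(1 / (M + 1)) *\<^sub>R v \<bullet> a < 1"
      using a M by (auto simp: positive_root_iff divide_less_eq)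
  qed
  then show ?thesis by blast
qed

lemma regular_transl_iff:
  assumes "x \<in> lattice"
  shows "regular Phip (transl x) \<longleftrightarrow> (\<forall>b\<in>Phi. x \<bullet> b \<noteq> 0)"
proof -
  obtain y0 where y0: "y0 \<in> base_alcove Phip" using base_alcove_nonempty by blast
  have in_strip_iff:
    "act (transl x) ` base_alcove Phip \<subseteq> {y. 0 < y \<bullet> a \<and> y \<bullet> a < 1} \<longleftrightarrow> x \<bullet> a = 0"
    if a: "a \<in> Phip" for a
  proof -
    obtain m where m: "x \<bullet> a = of_int m"
      using inner_root_Ints[OF assms] a by (auto simp: positive_root_iff elim: Ints_cases)
    have unit: "\<forall>y\<in>base_alcove Phip. 0 < y \<bullet> a \<and> y \<bullet> a < 1"
      using a by (simp add: base_alcove_def)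
    have "act (transl x) ` base_alcove Phip \<subseteq> {y. 0 < y \<bullet> a \<and> y \<bullet> a < 1} \<longleftrightarrow>
        (\<forall>y\<in>base_alcove Phip. of_int 0 < of_int m + y \<bullet> a) \<and>
        (\<forall>y\<in>base_alcove Phip. of_int m + y \<bullet> a < of_int 1)"
      by (simp add: image_subset_iff ball_conj_distrib act_def transl_def inner_add_left m)
    also have "\<dots> \<longleftrightarrow> m = 0"
      unfolding all_int_less_shifted_iff[OF y0 unit] all_shifted_less_int_iff[OF y0 unit] by auto
    finally show ?thesis using m by simp
  qed
  have "regular Phip (transl x) \<longleftrightarrow> (\<forall>a\<in>Phip. x \<bullet> a \<noteq> 0)"
    unfolding regular_def using in_strip_iff by blast
  also have "\<dots> \<longleftrightarrow> (\<forall>b\<in>Phi. x \<bullet> b \<noteq> 0)"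
    using root_cases by (fastforce simp: positive_root_iff inner_minus_right)
  finally show ?thesis .
qed

lemma ew_length_transl:
  assumes "x \<in> lattice"
  shows "real (ew_length Phip (transl x)) = (\<Sum>a\<in>Phip. \<bar>x \<bullet> a\<bar>)"
proof -
  obtain y0 where y0: "y0 \<in> base_alcove Phip" using base_alcove_nonempty by blast
  define K where
    "K a = {k. 1 \<le> k \<and> k \<le> \<lfloor>x \<bullet> a\<rfloor> \<or> \<lfloor>x \<bullet> a\<rfloor> + 1 \<le> k \<and> k \<le> 0}" for a
  have separates_iff:
    "separates a (of_int k) (base_alcove Phip) (act (transl x) ` base_alcove Phip) \<longleftrightarrow> k \<in> K a"
    if a: "a \<in> Phip" for a k
  proof -
    obtain n where n: "x \<bullet> a = of_int n"
      using inner_root_Ints[OF assms] a by (auto simp: positive_root_iff elim: Ints_cases)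
    have unit: "\<forall>y\<in>base_alcove Phip. 0 < y \<bullet> a \<and> y \<bullet> a < 1"
      using a by (simp add: base_alcove_def)
    show ?thesis
      using all_int_less_shifted_iff[OF y0 unit, of k 0] all_shifted_less_int_iff[OF y0 unit, of 0 k]
        all_int_less_shifted_iff[OF y0 unit, of k n] all_shifted_less_int_iff[OF y0 unit, of n k]
      by (simp add: separates_def K_def act_def transl_def inner_add_left n) blast
  qed
  have abs_inner: "real (card (K a)) = \<bar>x \<bullet> a\<bar>" if a: "a \<in> Phip" for a
  proof -
    obtain n where "x \<bullet> a = of_int n"
      using inner_root_Ints[OF assms, of a] a by (auto simp: positive_root_iff elim: Ints_cases)
    then show ?thesis by (simp add: K_def card_int_walls_between)
  qed
  have "{(a, k). a \<in> Phip \<and> separates a (of_int k) (base_alcove Phip) (act (transl x) ` base_alcove Phip)}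
      = Sigma Phip K"
    using separates_iff by auto
  then have "real (ew_length Phip (transl x)) = (\<Sum>a\<in>Phip. real (card (K a)))"
    using finite_positive_roots by (simp add: ew_length_def K_def finite_int_walls_between)
  also have "\<dots> = (\<Sum>a\<in>Phip. \<bar>x \<bullet> a\<bar>)" using abs_inner by simp
  finally show ?thesis .
qed

end

locale rho_root_datum = positive_root_datum Phi cor Phip v
  for Phi :: "(real^'n::finite) set" and cor Phip v +
  fixes rho :: "real^'n"
  assumes rho_lattice: "rho \<in> lattice" and rho_simple: "\<forall>a\<in>simple_roots Phip. rho \<bullet> a = 1"
begin

lemma rho_positive: "b \<in> Phip \<Longrightarrow> 0 < rho \<bullet> b"
  using inner_positive_root_pos rho_simple by simp

lemma rho_regular: "\<forall>b\<in>Phi. rho \<bullet> b \<noteq> 0"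
  using root_cases rho_positive by (fastforce simp: inner_minus_right)

lemma rho_le_dominant:
  assumes x: "x \<in> lattice" and dominant: "\<forall>a\<in>Phip. 0 < x \<bullet> a" and "b \<in> Phip"
  shows "rho \<bullet> b \<le> x \<bullet> b"
proof -
  have "0 \<le> (x - rho) \<bullet> a" if a: "a \<in> simple_roots Phip" for a
  proof -
    have "a \<in> Phip" using simple_root_positive[OF a] .
    then have "x \<bullet> a \<in> \<int>" and "0 < x \<bullet> a"
      using inner_root_Ints[OF x] dominant by (auto simp: positive_root_iff)
    then have "1 \<le> x \<bullet> a" using Ints_nonzero_abs_ge1[of "x \<bullet> a"] by simp
    then show ?thesis using rho_simple a by (simp add: inner_diff_left)
  qed
  then show ?thesis
    using inner_positive_root_nonneg[of "x - rho" b] assms(3) by (simp add: inner_diff_left)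
qed

lemma sum_abs_inner_rho_le:
  assumes "x \<in> lattice" and "\<forall>b\<in>Phi. x \<bullet> b \<noteq> 0"
  shows "(\<Sum>b\<in>Phi. \<bar>rho \<bullet> b\<bar>) \<le> (\<Sum>b\<in>Phi. \<bar>x \<bullet> b\<bar>)"
  using assms
proof (induction "card {b\<in>Phip. x \<bullet> b < 0}" arbitrary: x rule: less_induct)
  case less
  show ?case
  proof (cases "\<exists>b\<in>Phip. x \<bullet> b < 0")
    case False
    then have "\<forall>a\<in>Phip. 0 < x \<bullet> a"
      using less.prems(2) by (force simp: positive_root_iff)
    then have "(\<Sum>b\<in>Phip. \<bar>rho \<bullet> b\<bar>) \<le> (\<Sum>b\<in>Phip. \<bar>x \<bullet> b\<bar>)"
      using rho_le_dominant[OF less.prems(1)] rho_positive by (intro sum_mono) force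
    then show ?thesis by (simp add: sum_roots_abs_inner)
  next
    case True
    then obtain a where a: "a \<in> simple_roots Phip" and xa: "x \<bullet> a < 0"
      using inner_positive_root_nonneg by (meson not_le)
    have aR: "a \<in> Phi" using simple_root_positive[OF a] by (simp add: positive_root_iff)
    let ?x = "refl_cochar cor a x"
    have "?x \<in> lattice" using refl_cochar_lattice[OF aR less.prems(1)] .
    moreover have "\<forall>b\<in>Phi. ?x \<bullet> b \<noteq> 0"
      using less.prems(2) refl_char_mem[OF aR] by (simp add: inner_refl_cochar)
    ultimately have "(\<Sum>b\<in>Phi. \<bar>rho \<bullet> b\<bar>) \<le> (\<Sum>b\<in>Phi. \<bar>?x \<bullet> b\<bar>)"
      using less.hyps card_negative_roots_refl_cochar_less[OF a xa] by blast
    also have "\<dots> = (\<Sum>b\<in>Phi. \<bar>x \<bullet> b\<bar>)"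
      unfolding inner_refl_cochar using sum.reindex_bij_betw[OF bij_betw_refl_char[OF aR]] .
    finally show ?thesis .
  qed
qed

lemma ew_length_transl_weyl_rho_le:
  assumes w: "w \<in> weyl_group Phi cor" and x: "x \<in> lattice" and "\<forall>b\<in>Phi. x \<bullet> b \<noteq> 0"
  shows "ew_length Phip (transl (w rho)) \<le> ew_length Phip (transl x)"
proof -
  have "real (ew_length Phip (transl (w rho))) = (\<Sum>b\<in>Phip. \<bar>w rho \<bullet> b\<bar>)"
    using ew_length_transl[OF weyl_group_lattice[OF w rho_lattice]] .
  also have "\<dots> = (\<Sum>b\<in>Phi. \<bar>w rho \<bullet> b\<bar>) / 2"
    by (simp add: sum_roots_abs_inner)
  also have "\<dots> = (\<Sum>b\<in>Phi. \<bar>rho \<bullet> b\<bar>) / 2"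
    by (simp add: weyl_group_sum_abs_inner[OF w])
  also have "\<dots> \<le> (\<Sum>b\<in>Phi. \<bar>x \<bullet> b\<bar>) / 2"
    using sum_abs_inner_rho_le[OF x] assms(3) by simp
  also have "\<dots> = real (ew_length Phip (transl x))"
    using ew_length_transl[OF x] by (simp add: sum_roots_abs_inner)
  finally show ?thesis by simp
qed

lemma transl_mem_adm_reg_iff:
  assumes x: "x \<in> lattice"
  shows "transl x \<in> adm_reg Phi Phip cor rho \<longleftrightarrow> (\<exists>w\<in>weyl_group Phi cor. x = w rho)"
proof
  assume "transl x \<in> adm_reg Phi Phip cor rho"
  then obtain w where w: "w \<in> weyl_group Phi cor"
    and le: "bruhat_le Phip cor (transl x) (transl (w rho))" and reg: "regular Phip (transl x)"
    unfolding adm_reg_def adm_def by blast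
  have "\<not> ew_length Phip (transl x) < ew_length Phip (transl (w rho))"
    using ew_length_transl_weyl_rho_le[OF w x] reg regular_transl_iff[OF x] by simp
  then have "transl x = transl (w rho)"
    using bruhat_le_imp_eq_or_length_less[OF le] by blast
  then show "\<exists>w\<in>weyl_group Phi cor. x = w rho" using w by (auto simp: transl_def)
next
  assume "\<exists>w\<in>weyl_group Phi cor. x = w rho"
  then obtain w where w: "w \<in> weyl_group Phi cor" and xw: "x = w rho" by blast
  have "transl x \<in> ext_affine_weyl Phi cor"
    using x weyl_group.weyl_id by (simp add: ext_affine_weyl_def transl_def)
  moreover have "bruhat_le Phip cor (transl x) (transl (w rho))"
    by (simp add: bruhat_le_def xw)
  moreover have "regular Phip (transl x)"
    using regular_transl_iff[OF x] weyl_group_regular[OF w rho_regular] xw by simp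
  ultimately show "transl x \<in> adm_reg Phi Phip cor rho"
    using w unfolding adm_reg_def adm_def by blast
qed

end

theorem lemma8p4:
  fixes Phi Phip :: "(real^'n) set" and cor :: "real^'n \<Rightarrow> real^'n" and rho :: "real^'n"
  assumes "root_datum Phi cor" and "reduced_roots Phi" and "positive_system Phi Phip"
    and "rho \<in> lattice" and "\<forall>a\<in>simple_roots Phip. rho \<bullet> a = 1"
  shows "{x \<in> adm_reg Phi Phip cor rho. \<exists>m\<in>lattice. x = transl m}
           = (\<lambda>w. transl (w rho)) ` weyl_group Phi cor"
proof -
  obtain v where "\<forall>a\<in>Phi. v \<bullet> a \<noteq> 0" and "Phip = {a\<in>Phi. 0 < v \<bullet> a}"
    using assms(3) unfolding positive_system_def by auto
  then interpret rho_root_datum Phi cor Phip v rho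
    using assms by unfold_locales auto
  show ?thesis
    using transl_mem_adm_reg_iff weyl_group_lattice[OF _ rho_lattice] by auto
qed

end
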